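(* The polynomials $f^*(n,q)$ satisfy: (a) for each $n\ge2$, $f^*(n,q)$ has degree $2n-4$ in $q$ and leading coefficient $1$; (b) for any integers $3\le n<n'$, we have $f^*(n,q)<_{\mathrm{lex}}f^*(n',q)$, and the first position at which the coefficient sequences of $f^*(n,q)$ and $f^*(n',q)$ differ is the $n$-th entry (the term of $n$-th highest order), where the two entries differ by exactly $1$.
   Context: For a polynomial $\phi$ defined on $\{-1,\dots,n-1\}$ (as a function of the integer argument) with $\phi(-1)=0$, $n\ge1$ and $-1\le k\le\frac{n-1}{2}$, let $u(\phi,n,q,k)=q^{2k+2}\phi(n-k-1)+\phi(k)+\bigl(\sum_{i=0}^kq^i\bigr)\bigl(\sum_{j=k}^{n-2}q^j\bigr)$. For $n\ge1$ let $k^*(n)=n-2^{\lfloor\log_2 n\rfloor}$ (the unique $0\le k\le\frac{n-1}{2}$ with $n-k$ a power of two). Define polynomials in $q$: $f^*(-1,q)=f^*(0,q)=f^*(1,q)=0$, $f^*(2,q)=1$, $f^*(3,q)=q^2+1$, $f^*(4,q)=q^4+2q^2+q+1$, and recursively $f^*(n,q)=u(f^*(\cdot,q),n,q,k^*(n))$ for $n\ge5$. The coefficient sequence of a nonzero polynomial lists its coefficients starting with the leading coefficient in order of decreasing power, followed by infinitely many zeros. For polynomials $g,h$ with coefficient sequences $(a_i)$, $(b_i)$, $g<_{\mathrm{lex}}h$ means there is $i\ge1$ with $a_i<b_i$ and $a_j=b_j$ for all $j<i$. *)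

theory Defs
  imports Complex_Main "HOL-Computational_Algebra.Polynomial"
begin

text \<open>The paper's operator u, for phi defined on integers (phi(-1)=0 handled by the caller),
  with q the polynomial indeterminate.\<close>
definition u :: "(int \<Rightarrow> int poly) \<Rightarrow> int \<Rightarrow> int \<Rightarrow> int poly" where
  "u phi n k = monom 1 (nat (2*k+2)) * phi (n-k-1) + phi k
      + (\<Sum>i\<in>{0..k}. monom 1 (nat i)) * (\<Sum>j\<in>{k..n-2}. monom 1 (nat j))"

definition kstar :: "nat \<Rightarrow> nat" where
  "kstar n = n - 2 ^ nat \<lfloor>log 2 (real n)\<rfloor>"

function fstar :: "nat \<Rightarrow> int poly" where
  "fstar n = (if n \<le> 1 then 0
     else if n = 2 then 1
     else if n = 3 then monom 1 2 + 1
     else if n = 4 then monom 1 4 + monom 2 2 + monom 1 1 + 1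
     else (let k = kstar n in
        monom 1 (2*k+2) * fstar (n-k-1) + fstar k
        + (\<Sum>i\<in>{0..k}. monom 1 i) * (\<Sum>j\<in>{k..n-2}. monom 1 j)))"
  by auto
termination
proof (relation "measure id")
  fix n k :: nat
  assume "\<not> n \<le> 1" "n \<noteq> 2" "n \<noteq> 3" "n \<noteq> 4" "k = kstar n"
  moreover have "(1::nat) \<le> 2 ^ nat \<lfloor>log 2 (real n)\<rfloor>" by simp
  ultimately show "(n - k - 1, n) \<in> measure id" "(k, n) \<in> measure id"
    unfolding kstar_def by auto
qed auto

text \<open>Coefficient sequence a_1, a_2, ... (index from 1): leading coefficient first,
  then decreasing powers, then zeros.\<close>
definition coeff_seq :: "int poly \<Rightarrow> nat \<Rightarrow> int" where
  "coeff_seq p i = (if 1 \<le> i \<and> i \<le> degree p + 1 then coeff p (degree p + 1 - i) else 0)"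

definition lex_less :: "int poly \<Rightarrow> int poly \<Rightarrow> bool" where
  "lex_less g h = (\<exists>i\<ge>1. coeff_seq g i < coeff_seq h i \<and>
                      (\<forall>j. 1 \<le> j \<and> j < i \<longrightarrow> coeff_seq g j = coeff_seq h j))"

end

(*
  Write n = 2^m + k with 0 <= k < 2^m, so that kstar n = k and the recursion becomes
    f(n) = q^(2k+2) f(2^m - 1) + f(k) + q^k [k] [2^m - 2],   [a] = 1 + q + ... + q^a,
  an identity that also holds for n = 4. The coefficient of q^x in [a] [b] counts the pairs
  (i, j) in [0, a] x [0, b] with i + j = x. By strong induction only the first summand reaches
  the exponent 2n - 4, where it contributes 1; this gives (a).
  For (b) read the coefficients of f(n) and f(n+1) from the leading term downwards. If n and
  n + 1 lie in the same block [2^m, 2^(m+1)), the shifted copies of f(2^m - 1) are aligned,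
  f(k) and f(k+1) are too small to reach the top n coefficients, and the pair counts agree
  there except at the n-th coefficient, where f(n+1) gains exactly one. If n + 1 = 2^m, then
  f(n+1) = q^2 f(n) + [2^m - 2] and the same holds. Iterating from n to n' gives (b).
*)

theory Submission
  imports Defs
begin

text \<open>Coefficients indexed by integers and zero at negative exponents, so that shifting by a
  monomial needs no truncated subtraction.\<close>
definition icoeff :: "'a::zero poly \<Rightarrow> int \<Rightarrow> 'a" where
  "icoeff p x = (if x < 0 then 0 else coeff p (nat x))"

lemma icoeff_of_nat [simp]: "icoeff p (int i) = coeff p i"
  by (simp add: icoeff_def)

lemma icoeff_0 [simp]: "icoeff 0 x = 0"
  by (simp add: icoeff_def)

lemma icoeff_1 [simp]: "icoeff 1 x = (if x = 0 then 1 else 0)"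
  by (simp add: icoeff_def coeff_1)

lemma icoeff_add [simp]: "icoeff (p + q) x = icoeff p x + icoeff q x"
  by (simp add: icoeff_def)

lemma icoeff_monom [simp]: "icoeff (monom a k) x = (if x = int k then a else 0)"
  by (auto simp: icoeff_def coeff_monom)

lemma icoeff_monom_mult [simp]:
  "icoeff (monom (1::'a::comm_semiring_1) k * p) x = icoeff p (x - int k)"
  by (auto simp: icoeff_def coeff_monom_mult nat_diff_distrib)

lemma coeff_seq_eq_icoeff:
  assumes "1 \<le> j"
  shows "coeff_seq p j = icoeff p (int (degree p) + 1 - int j)"
  using assms by (auto simp: coeff_seq_def icoeff_def nat_diff_distrib' nat_add_distrib)

lemma degree_eq_icoeffI:
  assumes "\<And>x. x > int d \<Longrightarrow> icoeff p x = 0" and "coeff p d \<noteq> 0"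
  shows "degree p = d"
proof (rule antisym)
  show "degree p \<le> d"
    using assms(1)[of "int _"] by (intro degree_le) auto
  show "d \<le> degree p"
    using assms(2) by (rule le_degree)
qed

definition geom_poly :: "nat \<Rightarrow> 'a::comm_semiring_1 poly" where
  "geom_poly a = (\<Sum>i\<in>{0..a}. monom 1 i)"

lemma geom_poly_0: "geom_poly 0 = 1"
  by (simp add: geom_poly_def one_poly_def monom_0)

lemma geom_poly_Suc: "geom_poly (Suc a) = geom_poly a + monom 1 (Suc a)"
  by (simp add: geom_poly_def)

lemma icoeff_geom_poly: "icoeff (geom_poly a) x = (if 0 \<le> x \<and> x \<le> int a then 1 else 0)"
  by (auto simp: icoeff_def geom_poly_def coeff_sum coeff_monom)

lemma sum_monom_atLeastAtMost:
  assumes "k \<le> h"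
  shows "(\<Sum>j\<in>{k..h}. monom (1::'a::comm_semiring_1) j) = monom 1 k * geom_poly (h - k)"
proof -
  have "(\<Sum>j\<in>{k..h}. monom (1::'a) j) = (\<Sum>i\<in>{0..h-k}. monom 1 (i + k))"
    using sum.shift_bounds_cl_nat_ivl[of "monom (1::'a)" 0 k "h - k"] assms by simp
  also have "\<dots> = monom 1 k * geom_poly (h - k)"
    by (simp add: geom_poly_def sum_distrib_left mult_monom add.commute)
  finally show ?thesis .
qed

text \<open>The number of pairs \<open>(i, j) \<in> [0, a] \<times> [0, b]\<close> with \<open>i + j = x\<close>.\<close>
definition pair_count :: "int \<Rightarrow> int \<Rightarrow> int \<Rightarrow> int" where
  "pair_count a b x = max 0 (min a x - max 0 (x - b) + 1)"

lemma pair_count_0: "0 \<le> b \<Longrightarrow> pair_count 0 b x = (if 0 \<le> x \<and> x \<le> b then 1 else 0)"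
  by (simp add: pair_count_def max_def min_def)

lemma icoeff_geom_poly_mult:
  "icoeff (geom_poly a * geom_poly b :: 'a::comm_ring_1 poly) x = of_int (pair_count (int a) (int b) x)"
proof (induction a arbitrary: x)
  case 0
  then show ?case
    by (simp add: geom_poly_0 icoeff_geom_poly pair_count_0)
next
  case (Suc a)
  have "pair_count (int (Suc a)) (int b) x
      = pair_count (int a) (int b) x + (if 0 \<le> x - int (Suc a) \<and> x - int (Suc a) \<le> int b then 1 else 0)"
    by (simp add: pair_count_def max_def min_def)
  then show ?case
    by (simp add: geom_poly_Suc distrib_right Suc.IH icoeff_geom_poly)
qed

lemma pair_count_Suc:
  "0 \<le> a \<Longrightarrow> 0 \<le> b \<Longrightarrow> -1 \<le> x \<Longrightarrow>
    pair_count (a + 1) b (x + 1) = pair_count a b x + (if x + 1 \<le> b then 1 else 0)"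
  by (simp add: pair_count_def max_def min_def)

declare fstar.simps [simp del]

lemma fstar_0 [simp]: "fstar 0 = 0"
  by (simp add: fstar.simps)

lemma fstar_Suc_0 [simp]: "fstar (Suc 0) = 0"
  by (simp add: fstar.simps)

lemma fstar_2: "fstar 2 = 1"
  by (simp add: fstar.simps)

lemma fstar_3: "fstar 3 = monom 1 2 + 1"
  by (simp add: fstar.simps)

lemma fstar_4: "fstar 4 = monom 1 4 + monom 2 2 + monom 1 1 + 1"
  by (simp add: fstar.simps)

lemma four_le_two_power: "2 \<le> m \<Longrightarrow> (4::'a::linordered_semidom) \<le> 2 ^ m"
  using power_increasing[of 2 m "2::'a"] by simp

lemma kstar_binary:
  assumes "k < 2 ^ m"
  shows "kstar (2 ^ m + k) = k"
proof -
  have "\<lfloor>log 2 (real (2 ^ m + k))\<rfloor> = int m"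
    using floor_log_nat_eq_if[of 2 m "2 ^ m + k"] assms by simp
  then show ?thesis
    by (simp add: kstar_def)
qed

lemma binary_decomposition:
  fixes n :: nat
  assumes "4 \<le> n"
  obtains m k where "2 \<le> m" "n = 2 ^ m + k" "k < 2 ^ m"
proof -
  obtain m where m: "2 ^ m \<le> n" "n < 2 ^ (m + 1)"
    using ex_power_ivl1[of 2 n] assms by auto
  have "2 \<le> m"
  proof (rule ccontr)
    assume "\<not> 2 \<le> m"
    then have "(2::nat) ^ (m + 1) \<le> 2 ^ 2"
      by (intro power_increasing) auto
    then show False
      using m assms by simp
  qed
  then show thesis
    using that[of m "n - 2 ^ m"] m by auto
qed

lemma fstar_binary:
  assumes "2 \<le> m" "k < 2 ^ m"
  shows "fstar (2 ^ m + k) = monom 1 (2 * k + 2) * fstar (2 ^ m - 1) + fstar k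
           + monom 1 k * (geom_poly k * geom_poly (2 ^ m - 2))"
proof (cases "2 ^ m + k = (4::nat)")
  case True
  have "m < 3"
    using True power_increasing[of 3 m "2::nat"] by (cases "3 \<le> m") auto
  with assms have "m = 2"
    by simp
  with True have "k = 0"
    by simp
  with \<open>m = 2\<close> show ?thesis
    by (intro poly_eqI) (auto simp: fstar_3 fstar_4 geom_poly_def coeff_monom_mult coeff_sum)
next
  case False
  have "(4::nat) \<le> 2 ^ m"
    using assms(1) by (rule four_le_two_power)
  then have "fstar (2 ^ m + k) = monom 1 (2 * k + 2) * fstar (2 ^ m - 1) + fstar k
      + (\<Sum>i\<in>{0..k}. monom 1 i) * (\<Sum>j\<in>{k..2 ^ m + k - 2}. monom 1 j)"
    using False by (subst fstar.simps) (simp add: kstar_binary assms Let_def)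
  also have "(\<Sum>j\<in>{k..2 ^ m + k - 2}. monom 1 j) = monom 1 k * geom_poly (2 ^ m - 2)"
    using \<open>4 \<le> 2 ^ m\<close> by (subst sum_monom_atLeastAtMost) auto
  finally show ?thesis
    by (simp add: geom_poly_def ac_simps)
qed

lemma icoeff_fstar_binary:
  assumes "2 \<le> m" "k < 2 ^ m"
  shows "icoeff (fstar (2 ^ m + k)) x = icoeff (fstar (2 ^ m - 1)) (x - int (2 * k + 2))
           + icoeff (fstar k) x + pair_count (int k) (2 ^ m - 2) (x - int k)"
proof -
  have "(4::nat) \<le> 2 ^ m"
    using assms(1) by (rule four_le_two_power)
  then have "int (2 ^ m - 2) = 2 ^ m - 2"
    by (simp add: of_nat_diff)
  then show ?thesis
    by (simp add: fstar_binary[OF assms] icoeff_geom_poly_mult)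
qed

lemma icoeff_fstar_above_degree: "2 * int n - 4 < x \<Longrightarrow> icoeff (fstar n) x = 0"
proof (induction n arbitrary: x rule: less_induct)
  case (less n)
  show ?case
  proof (cases "n \<le> 3")
    case True
    then consider "n = 0" | "n = 1" | "n = 2" | "n = 3"
      by linarith
    then show ?thesis
      using less.prems by cases (auto simp: fstar_2 fstar_3)
  next
    case False
    then have "4 \<le> n"
      by simp
    then obtain m k where mk: "2 \<le> m" "n = 2 ^ m + k" "k < 2 ^ m"
      by (rule binary_decomposition)
    have "(4::int) \<le> 2 ^ m"
      using mk(1) by (rule four_le_two_power)
    moreover have "icoeff (fstar (2 ^ m - 1)) (x - int (2 * k + 2)) = 0"
      using less.prems mk \<open>4 \<le> 2 ^ m\<close> by (intro less.IH) (auto simp: of_nat_diff)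
    moreover have "icoeff (fstar k) x = 0"
      using less.prems mk \<open>4 \<le> 2 ^ m\<close> by (intro less.IH) auto
    ultimately show ?thesis
      using less.prems mk by (simp add: icoeff_fstar_binary pair_count_def)
  qed
qed

lemma icoeff_fstar_degree: "2 \<le> n \<Longrightarrow> icoeff (fstar n) (2 * int n - 4) = 1"
proof (induction n rule: less_induct)
  case (less n)
  show ?case
  proof (cases "n \<le> 3")
    case True
    then consider "n = 2" | "n = 3"
      using less.prems by linarith
    then show ?thesis
      by cases (auto simp: fstar_2 fstar_3)
  next
    case False
    then have "4 \<le> n"
      by simp
    then obtain m k where mk: "2 \<le> m" "n = 2 ^ m + k" "k < 2 ^ m"
      by (rule binary_decomposition)
    have "(4::int) \<le> 2 ^ m"
      using mk(1) by (rule four_le_two_power)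
    moreover have "icoeff (fstar (2 ^ m - 1)) (2 * int (2 ^ m - 1) - 4) = 1"
      using four_le_two_power[OF mk(1), where 'a=nat] mk by (intro less.IH) auto
    moreover have "icoeff (fstar k) (2 * int n - 4) = 0"
      using mk \<open>4 \<le> 2 ^ m\<close> by (intro icoeff_fstar_above_degree) auto
    ultimately show ?thesis
      using mk by (simp add: icoeff_fstar_binary pair_count_def)
  qed
qed

lemma coeff_fstar_degree:
  assumes "2 \<le> n"
  shows "coeff (fstar n) (2 * n - 4) = 1"
proof -
  have "int (2 * n - 4) = 2 * int n - 4"
    using assms by simp
  then show ?thesis
    using icoeff_fstar_degree[OF assms] icoeff_of_nat[of "fstar n" "2 * n - 4"] by simp
qed

lemma degree_fstar: "2 \<le> n \<Longrightarrow> degree (fstar n) = 2 * n - 4"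
  by (rule degree_eq_icoeffI) (auto intro: icoeff_fstar_above_degree simp: coeff_fstar_degree)

lemma lead_coeff_fstar: "2 \<le> n \<Longrightarrow> lead_coeff (fstar n) = 1"
  by (simp add: degree_fstar coeff_fstar_degree)

lemma coeff_seq_fstar:
  assumes "2 \<le> n" "1 \<le> j"
  shows "coeff_seq (fstar n) j = icoeff (fstar n) (2 * int n - 4 - (int j - 1))"
proof -
  from assms(2) have "coeff_seq (fstar n) j = icoeff (fstar n) (int (degree (fstar n)) + 1 - int j)"
    by (rule coeff_seq_eq_icoeff)
  also have "int (degree (fstar n)) + 1 - int j = 2 * int n - 4 - (int j - 1)"
    using assms by (simp add: degree_fstar)
  finally show ?thesis .
qed

lemma icoeff_fstar_top_Suc_power_two:
  assumes "2 \<le> m" "Suc n = 2 ^ m" "0 \<le> t" "t \<le> int n - 1"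
  shows "icoeff (fstar (Suc n)) (2 * int n - 2 - t)
           = icoeff (fstar n) (2 * int n - 4 - t) + (if t = int n - 1 then 1 else 0)"
proof -
  have "(4::int) \<le> 2 ^ m"
    using assms(1) by (rule four_le_two_power)
  have "n = 2 ^ m - 1"
    using assms(2) by simp
  then have "int n = 2 ^ m - 1"
    using \<open>4 \<le> 2 ^ m\<close> by (simp add: of_nat_diff)
  have "icoeff (fstar (Suc n)) (2 * int n - 2 - t)
      = icoeff (fstar n) (2 * int n - 2 - t - 2) + pair_count 0 (2 ^ m - 2) (2 * int n - 2 - t)"
    using icoeff_fstar_binary[OF assms(1), of 0] assms(2) \<open>n = 2 ^ m - 1\<close> by simp
  also have "2 * int n - 2 - t - 2 = 2 * int n - 4 - t"
    by simp
  also have "pair_count 0 (2 ^ m - 2) (2 * int n - 2 - t) = (if t = int n - 1 then 1 else 0)"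
    using assms(3,4) \<open>int n = 2 ^ m - 1\<close> \<open>4 \<le> 2 ^ m\<close> by (simp add: pair_count_0)
  finally show ?thesis .
qed

lemma icoeff_fstar_top_Suc_binary:
  assumes "2 \<le> m" "n = 2 ^ m + k" "Suc k < 2 ^ m" "0 \<le> t" "t \<le> int n - 1"
  shows "icoeff (fstar (Suc n)) (2 * int n - 2 - t)
           = icoeff (fstar n) (2 * int n - 4 - t) + (if t = int n - 1 then 1 else 0)"
proof -
  have "(4::int) \<le> 2 ^ m"
    using assms(1) by (rule four_le_two_power)
  have "int k < 2 ^ m" "int n = 2 ^ m + int k"
    using assms(2,3) by (metis Suc_lessD of_nat_less_iff of_nat_numeral of_nat_power, simp)
  have "icoeff (fstar (Suc k)) (2 * int n - 2 - t) = 0"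
    using assms(4,5) \<open>int k < 2 ^ m\<close> \<open>int n = 2 ^ m + int k\<close>
    by (intro icoeff_fstar_above_degree) presburger
  moreover have "icoeff (fstar k) (2 * int n - 4 - t) = 0"
    using assms(4,5) \<open>int k < 2 ^ m\<close> \<open>int n = 2 ^ m + int k\<close>
    by (intro icoeff_fstar_above_degree) linarith
  moreover have "pair_count (int (Suc k)) (2 ^ m - 2) (2 * int n - 2 - t - int (Suc k))
      = pair_count (int k) (2 ^ m - 2) (2 * int n - 4 - t - int k) + (if t = int n - 1 then 1 else 0)"
    (is "_ = pair_count _ ?b ?x + _")
  proof -
    have "pair_count (int (Suc k)) ?b (2 * int n - 2 - t - int (Suc k)) = pair_count (int k + 1) ?b (?x + 1)"
      by (simp add: ac_simps)
    also have "\<dots> = pair_count (int k) ?b ?x + (if ?x + 1 \<le> ?b then 1 else 0)"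
      using assms(4,5) \<open>int k < 2 ^ m\<close> \<open>int n = 2 ^ m + int k\<close> \<open>4 \<le> 2 ^ m\<close>
      by (intro pair_count_Suc) linarith+
    also have "(?x + 1 \<le> ?b) = (t = int n - 1)"
      using assms(4,5) \<open>int n = 2 ^ m + int k\<close> by linarith
    finally show ?thesis .
  qed
  moreover have "2 * int n - 2 - t - int (2 * Suc k + 2) = 2 * int n - 4 - t - int (2 * k + 2)"
    by simp
  moreover have "Suc n = 2 ^ m + Suc k" "k < 2 ^ m"
    using assms(2,3) by simp_all
  ultimately show ?thesis
    unfolding \<open>Suc n = 2 ^ m + Suc k\<close> icoeff_fstar_binary[OF assms(1,3)]
    unfolding assms(2) icoeff_fstar_binary[OF assms(1) \<open>k < 2 ^ m\<close>] by simp
qed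

lemma icoeff_fstar_top_Suc:
  assumes "3 \<le> n" "0 \<le> t" "t \<le> int n - 1"
  shows "icoeff (fstar (Suc n)) (2 * int n - 2 - t)
           = icoeff (fstar n) (2 * int n - 4 - t) + (if t = int n - 1 then 1 else 0)"
proof (cases "n = 3")
  case True
  then consider "t = 0" | "t = 1" | "t = 2"
    using assms by linarith
  then show ?thesis
    using True by cases (simp_all add: fstar_3 fstar_4)
next
  case False
  then have "4 \<le> Suc n"
    using assms(1) by simp
  then obtain m k' where mk: "2 \<le> m" "Suc n = 2 ^ m + k'" "k' < 2 ^ m"
    by (rule binary_decomposition)
  show ?thesis
  proof (cases k')
    case 0
    then show ?thesis
      using icoeff_fstar_top_Suc_power_two[OF mk(1) _ assms(2,3)] mk(2) by simp
  next
    case (Suc k)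
    then show ?thesis
      using icoeff_fstar_top_Suc_binary[OF mk(1) _ _ assms(2,3)] mk(2,3) by simp
  qed
qed

lemma icoeff_fstar_top_less:
  assumes "3 \<le> n" "n < n'" "0 \<le> t" "t \<le> int n - 1"
  shows "icoeff (fstar n') (2 * int n' - 4 - t)
           = icoeff (fstar n) (2 * int n - 4 - t) + (if t = int n - 1 then 1 else 0)"
proof -
  have "Suc n \<le> n'"
    using assms(2) by simp
  then show ?thesis
  proof (induction n' rule: dec_induct)
    case base
    show ?case
      using icoeff_fstar_top_Suc[OF assms(1,3,4)] by (simp add: algebra_simps)
  next
    case (step n')
    have "icoeff (fstar (Suc n')) (2 * int (Suc n') - 4 - t) = icoeff (fstar n') (2 * int n' - 4 - t)"
      using icoeff_fstar_top_Suc[of n' t] step.hyps assms by (simp add: algebra_simps)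
    then show ?case
      using step.IH by simp
  qed
qed

theorem lemma3p40:
  shows "(\<forall>n::nat. 2 \<le> n \<longrightarrow> degree (fstar n) = 2*n - 4 \<and> lead_coeff (fstar n) = 1)
     \<and> (\<forall>n n'::nat. 3 \<le> n \<and> n < n' \<longrightarrow>
          lex_less (fstar n) (fstar n')
          \<and> (\<forall>j. 1 \<le> j \<and> j < n \<longrightarrow> coeff_seq (fstar n) j = coeff_seq (fstar n') j)
          \<and> coeff_seq (fstar n) n \<noteq> coeff_seq (fstar n') n
          \<and> \<bar>coeff_seq (fstar n') n - coeff_seq (fstar n) n\<bar> = 1)"
proof (intro conjI allI impI)
  show "degree (fstar n) = 2 * n - 4" "lead_coeff (fstar n) = 1" if "2 \<le> n" for n :: nat
    using that by (rule degree_fstar, rule lead_coeff_fstar)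
next
  fix n n' :: nat
  assume nn': "3 \<le> n \<and> n < n'"
  have coeff_seq_less: "coeff_seq (fstar n') j = coeff_seq (fstar n) j + (if j = n then 1 else 0)"
    if "1 \<le> j" "j \<le> n" for j
    using that nn' icoeff_fstar_top_less[of n n' "int j - 1"] by (simp add: coeff_seq_fstar)
  show "coeff_seq (fstar n) j = coeff_seq (fstar n') j" if "1 \<le> j \<and> j < n" for j
    using that coeff_seq_less by simp
  show "coeff_seq (fstar n) n \<noteq> coeff_seq (fstar n') n"
    and "\<bar>coeff_seq (fstar n') n - coeff_seq (fstar n) n\<bar> = 1"
    using nn' coeff_seq_less[of n] by simp_all
  show "lex_less (fstar n) (fstar n')"
    unfolding lex_less_def using nn' coeff_seq_less by (intro exI[of _ n]) auto
qed

end
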